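(* Let $q$ be a prime power and let $n,k,r,x$ be integers with $0\le x\le r\le \min(n,k)$. Let $\mathbf{M}$ be a random $n\times k$ matrix over $\mathbb{F}_q$ whose entries are independent and uniformly distributed on $\mathbb{F}_q$, conditioned on $\mathrm{rank}(\mathbf{M})=r$, and let $X=\{i\in\{1,\dots,k\}:\mathbf{e}_i\in\mathrm{Row}(\mathbf{M})\}$. Then $$P(|X|\ge x\mid R=r,\,N=n)=\frac{1}{\binom{k}{r}_q}\sum_{i=x}^{r}\binom{k}{i}\sum_{j=0}^{k-i}(-1)^j\binom{k-i}{j}\binom{k-i-j}{r-i-j}_q .$$
   Context: $\mathbf{e}_i$ denotes the $i$-th standard unit vector of $\mathbb{F}_q^k$, and $\mathrm{Row}(\mathbf{M})$ is the row space of $\mathbf{M}$. $R$ denotes the rank of $\mathbf{M}$ and $N$ its number of rows. $\binom{m}{d}$ is the ordinary binomial coefficient. $\binom{m}{d}_q$ is the Gaussian binomial coefficient, i.e. the number of $d$-dimensional subspaces of an $m$-dimensional vector space over $\mathbb{F}_q$, $\binom{m}{d}_q=\prod_{i=0}^{d-1}\frac{q^{m}-q^{i}}{q^{d}-q^{i}}$ for $0\le d\le m$. By convention $\binom{m}{d}_q=0$ if $d<0$ or $d>m$. *)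

theory Defs
  imports "Jordan_Normal_Form.DL_Rank"
begin

definition gauss_binom :: "nat \<Rightarrow> int \<Rightarrow> int \<Rightarrow> real" where
  "gauss_binom q m d =
     (if 0 \<le> d \<and> d \<le> m
      then (\<Prod>i<nat d. (real q ^ nat m - real q ^ i) / (real q ^ nat d - real q ^ i))
      else 0)"

definition row_space :: "'a::field mat \<Rightarrow> 'a vec set" where
  "row_space M = {transpose_mat M *\<^sub>v c | c. c \<in> carrier_vec (dim_row M)}"

text \<open>X = set of (0-based) column indices i such that e_i lies in the row space.\<close>
definition unit_idx :: "'a::field mat \<Rightarrow> nat set" where
  "unit_idx M = {i. i < dim_col M \<and> unit_vec (dim_col M) i \<in> row_space M}"

end

theory Submission
  imports Defs "HOL-Library.Cardinality"
begin

text \<open>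
  The number of n \<times> k matrices with a given row space V depends only on dim V, by strong
  induction on the dimension from \<open>|V|\<^sup>n = \<Sum>\<^bsub>U \<le> V\<^esub> #{M. Row M = U}\<close>. Hence the row space of a
  uniformly random matrix of rank r is a uniformly random r-dimensional subspace V of \<open>F\<^sub>q\<^sup>k\<close>.
  Write s(V) for the number of unit vectors in V. Counting the pairs (S, V) with |S| = m and
  \<open>{e\<^sub>i | i \<in> S} \<subseteq> V\<close> gives \<open>\<Sum>\<^sub>V C(s(V), m) = C(k, m) [k-m, r-m]\<^sub>q\<close>, since the r-dimensional
  subspaces through a fixed m-dimensional one correspond to the (r-m)-dimensional subspaces of
  the quotient. The indicator of \<open>s \<ge> x\<close> is the combination
  \<open>\<Sum>\<^sub>i\<^sub>=\<^sub>x\<^sup>r \<Sum>\<^sub>j (-1)\<^sup>j C(i+j, i) C(s, i+j)\<close> of the numbers C(s, m), which yields the formula.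
\<close>

section \<open>Spans of lists of vectors\<close>

text \<open>Subspaces of \<open>F\<^sup>k\<close> are handled through explicit lists of generators, which makes their
  cardinalities directly computable.\<close>

definition list_comb :: "nat \<Rightarrow> (nat \<Rightarrow> 'a::field) \<Rightarrow> 'a vec list \<Rightarrow> 'a vec" where
  "list_comb k c vs = vec k (\<lambda>j. \<Sum>i<length vs. c i * vs ! i $ j)"

definition list_span :: "nat \<Rightarrow> 'a::field vec list \<Rightarrow> 'a vec set" where
  "list_span k vs = range (\<lambda>c. list_comb k c vs)"

lemma list_comb_carrier [simp]: "list_comb k c vs \<in> carrier_vec k"
  and list_comb_dim [simp]: "dim_vec (list_comb k c vs) = k"
  by (simp_all add: list_comb_def)

lemma list_comb_index [simp]:
  "j < k \<Longrightarrow> list_comb k c vs $ j = (\<Sum>i<length vs. c i * vs ! i $ j)"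
  by (simp add: list_comb_def)

lemma list_comb_cong:
  "(\<And>i. i < length vs \<Longrightarrow> c i = d i) \<Longrightarrow> list_comb k c vs = list_comb k d vs"
  unfolding list_comb_def by (intro arg_cong[where f = "vec k"] ext sum.cong) auto

lemma list_comb_add: "list_comb k c vs + list_comb k d vs = list_comb k (\<lambda>i. c i + d i) vs"
  by (rule eq_vecI) (auto simp: sum.distrib distrib_right)

lemma list_comb_smult: "a \<cdot>\<^sub>v list_comb k c vs = list_comb k (\<lambda>i. a * c i) vs"
  by (rule eq_vecI) (auto simp: sum_distrib_left mult.assoc)

lemma list_comb_Nil: "list_comb k c [] = 0\<^sub>v k"
  by (rule eq_vecI) auto

lemma list_comb_snoc:
  "v \<in> carrier_vec k \<Longrightarrow> list_comb k c (vs @ [v]) = list_comb k c vs + c (length vs) \<cdot>\<^sub>v v"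
  by (intro eq_vecI) (auto simp: nth_append)

lemma list_span_carrier: "list_span k vs \<subseteq> carrier_vec k"
  by (auto simp: list_span_def)

lemma list_span_add: "x \<in> list_span k vs \<Longrightarrow> y \<in> list_span k vs \<Longrightarrow> x + y \<in> list_span k vs"
  unfolding list_span_def using list_comb_add by blast

lemma list_span_smult: "x \<in> list_span k vs \<Longrightarrow> a \<cdot>\<^sub>v x \<in> list_span k vs"
  unfolding list_span_def using list_comb_smult by blast

lemma zero_in_list_span: "0\<^sub>v k \<in> list_span k vs"
proof -
  have "list_comb k (\<lambda>_. 0) vs = 0\<^sub>v k" by (rule eq_vecI) auto
  then show ?thesis unfolding list_span_def by (metis rangeI)
qed

lemma list_span_Nil: "list_span k [] = {0\<^sub>v k}"
  unfolding list_span_def by (auto simp: list_comb_Nil)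

lemma nth_in_list_span:
  assumes "i < length vs" "vs ! i \<in> carrier_vec k"
  shows "vs ! i \<in> list_span k vs"
proof -
  have "list_comb k (\<lambda>l. of_bool (l = i)) vs = vs ! i"
    using assms by (intro eq_vecI) (auto simp: if_distrib cong: if_cong)
  then show ?thesis unfolding list_span_def by (metis rangeI)
qed

lemma set_subset_list_span: "set vs \<subseteq> carrier_vec k \<Longrightarrow> set vs \<subseteq> list_span k vs"
  by (auto simp: in_set_conv_nth intro!: nth_in_list_span)

lemma list_comb_in_list_span:
  "set us \<subseteq> list_span k vs \<Longrightarrow> list_comb k c us \<in> list_span k vs"
proof (induction us arbitrary: c rule: rev_induct)
  case Nil
  then show ?case by (simp add: list_comb_Nil zero_in_list_span)
next
  case (snoc u us)
  then have "u \<in> carrier_vec k" using list_span_carrier by auto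
  with snoc show ?case by (auto simp: list_comb_snoc intro!: list_span_add list_span_smult)
qed

lemma list_span_mono: "set us \<subseteq> list_span k vs \<Longrightarrow> list_span k us \<subseteq> list_span k vs"
  using list_comb_in_list_span by (auto simp: list_span_def)

lemma list_span_eqI:
  "set us \<subseteq> list_span k vs \<Longrightarrow> set vs \<subseteq> list_span k us \<Longrightarrow> list_span k us = list_span k vs"
  using list_span_mono by blast

lemma list_span_snoc:
  assumes v: "v \<in> carrier_vec k"
  shows "list_span k (vs @ [v]) = (\<lambda>(w, a). w + a \<cdot>\<^sub>v v) ` (list_span k vs \<times> UNIV)"
proof
  show "list_span k (vs @ [v]) \<subseteq> (\<lambda>(w, a). w + a \<cdot>\<^sub>v v) ` (list_span k vs \<times> UNIV)"
    by (auto simp: list_span_def list_comb_snoc[OF v] image_iff)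
next
  show "(\<lambda>(w, a). w + a \<cdot>\<^sub>v v) ` (list_span k vs \<times> UNIV) \<subseteq> list_span k (vs @ [v])"
  proof clarify
    fix w a assume "w \<in> list_span k vs"
    then obtain c where w: "w = list_comb k c vs" by (auto simp: list_span_def)
    have "list_comb k (c(length vs := a)) (vs @ [v]) = list_comb k (c(length vs := a)) vs + a \<cdot>\<^sub>v v"
      by (simp add: list_comb_snoc[OF v])
    also have "list_comb k (c(length vs := a)) vs = w"
      unfolding w by (rule list_comb_cong) auto
    finally show "w + a \<cdot>\<^sub>v v \<in> list_span k (vs @ [v])"
      unfolding list_span_def by (metis rangeI)
  qed
qed

lemma finite_carrier_vec [simp]: "finite (carrier_vec k :: 'a::finite vec set)"
proof -
  have "carrier_vec k \<subseteq> vec_of_list ` {xs :: 'a list. set xs \<subseteq> UNIV \<and> length xs = k}"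
    by (auto intro!: image_eqI[of _ _ "list_of_vec _"] simp: vec_list)
  moreover have "finite {xs :: 'a list. set xs \<subseteq> UNIV \<and> length xs = k}"
    by (rule finite_lists_length_eq) simp
  ultimately show ?thesis by (meson finite_imageI finite_subset)
qed

lemma finite_list_span [simp]: "finite (list_span k (vs :: 'a::{finite,field} vec list))"
  by (rule finite_subset[OF list_span_carrier]) simp

lemma card_list_span_snoc:
  fixes vs :: "'a::{finite,field} vec list"
  assumes v: "v \<in> carrier_vec k" and v_notin: "v \<notin> list_span k vs"
  shows "card (list_span k (vs @ [v])) = CARD('a) * card (list_span k vs)"
proof -
  have "inj_on (\<lambda>(w, a). w + a \<cdot>\<^sub>v v) (list_span k vs \<times> UNIV)"
  proof (rule inj_onI, clarify)
    fix w a w' a' assume w: "w \<in> list_span k vs" and w': "w' \<in> list_span k vs"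
      and eq: "w + a \<cdot>\<^sub>v v = w' + a' \<cdot>\<^sub>v v"
    have wc: "w \<in> carrier_vec k" "w' \<in> carrier_vec k" using w w' list_span_carrier by auto
    have comp: "w $ j + a * v $ j = w' $ j + a' * v $ j" if "j < k" for j
      using arg_cong[OF eq, of "\<lambda>u. u $ j"] that wc v by simp
    show "w = w' \<and> a = a'"
    proof (cases "a = a'")
      case True
      then show ?thesis using comp wc by (intro conjI eq_vecI) auto
    next
      case False
      have "inverse (a - a') \<cdot>\<^sub>v (w' + (-1) \<cdot>\<^sub>v w) = v"
      proof (rule eq_vecI)
        fix j assume "j < dim_vec v"
        then have j: "j < k" using v by simp
        have "(a - a') * v $ j = w' $ j - w $ j"
          using comp[OF j] by (simp add: algebra_simps)
        then show "(inverse (a - a') \<cdot>\<^sub>v (w' + (-1) \<cdot>\<^sub>v w)) $ j = v $ j"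
          using j wc False by (simp add: field_simps)
      qed (use wc v in simp)
      moreover have "inverse (a - a') \<cdot>\<^sub>v (w' + (-1) \<cdot>\<^sub>v w) \<in> list_span k vs"
        using w w' by (intro list_span_smult list_span_add)
      ultimately show ?thesis using v_notin by simp
    qed
  qed
  then have "card (list_span k (vs @ [v])) = card (list_span k vs \<times> (UNIV :: 'a set))"
    unfolding list_span_snoc[OF v] by (rule card_image)
  then show ?thesis by (simp add: card_cartesian_product)
qed

section \<open>Independent lists and subspaces\<close>

definition indep_list :: "nat \<Rightarrow> 'a::field vec list \<Rightarrow> bool" where
  "indep_list k vs \<longleftrightarrow>
     set vs \<subseteq> carrier_vec k \<and> (\<forall>i<length vs. vs ! i \<notin> list_span k (take i vs))"

lemma indep_list_Nil [simp]: "indep_list k []"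
  by (simp add: indep_list_def)

lemma indep_list_carrier: "indep_list k vs \<Longrightarrow> set vs \<subseteq> carrier_vec k"
  by (simp add: indep_list_def)

lemma indep_list_snoc:
  "indep_list k (vs @ [v]) \<longleftrightarrow> indep_list k vs \<and> v \<in> carrier_vec k \<and> v \<notin> list_span k vs"
proof -
  have "(\<forall>i<length (vs @ [v]). (vs @ [v]) ! i \<notin> list_span k (take i (vs @ [v])))
    \<longleftrightarrow> (\<forall>i<length vs. vs ! i \<notin> list_span k (take i vs)) \<and> v \<notin> list_span k vs"
    by (auto simp: nth_append less_Suc_eq)
  then show ?thesis unfolding indep_list_def by auto
qed

lemma card_list_span_indep:
  fixes vs :: "'a::{finite,field} vec list"
  shows "indep_list k vs \<Longrightarrow> card (list_span k vs) = CARD('a) ^ length vs"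
proof (induction vs rule: rev_induct)
  case Nil
  then show ?case by (simp add: list_span_Nil)
next
  case (snoc v vs)
  then show ?case by (simp add: indep_list_snoc card_list_span_snoc)
qed

lemma indep_list_extend:
  assumes "indep_list k es" "set ws \<subseteq> carrier_vec k"
  shows "\<exists>us. indep_list k (es @ us) \<and> list_span k (es @ us) = list_span k (es @ ws)"
  using assms
proof (induction ws arbitrary: es)
  case Nil
  then show ?case by (intro exI[of _ "[]"]) simp
next
  case (Cons w ws)
  have es: "set es \<subseteq> carrier_vec k" using Cons.prems by (simp add: indep_list_def)
  have w: "w \<in> carrier_vec k" and ws: "set ws \<subseteq> carrier_vec k" using Cons.prems by auto
  show ?case
  proof (cases "w \<in> list_span k es")
    case True
    have "list_span k es \<subseteq> list_span k (es @ ws)"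
      using set_subset_list_span[of "es @ ws" k] es ws by (intro list_span_mono) auto
    then have "list_span k (es @ w # ws) = list_span k (es @ ws)"
      using set_subset_list_span[of "es @ ws" k] set_subset_list_span[of "es @ w # ws" k]
        es w ws True by (intro list_span_eqI) auto
    then show ?thesis using Cons.IH[OF Cons.prems(1) ws] by simp
  next
    case False
    then have "indep_list k (es @ [w])" using Cons.prems w by (simp add: indep_list_snoc)
    from Cons.IH[OF this ws] obtain us where
      "indep_list k (es @ w # us)" "list_span k (es @ w # us) = list_span k (es @ w # ws)"
      by auto
    then show ?thesis by blast
  qed
qed

definition is_subspace :: "nat \<Rightarrow> 'a::field vec set \<Rightarrow> bool" where
  "is_subspace k V \<longleftrightarrow> (\<exists>ws. set ws \<subseteq> carrier_vec k \<and> V = list_span k ws)"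

lemma is_subspace_list_span: "set ws \<subseteq> carrier_vec k \<Longrightarrow> is_subspace k (list_span k ws)"
  unfolding is_subspace_def by blast

lemma is_subspace_carrier: "is_subspace k V \<Longrightarrow> V \<subseteq> carrier_vec k"
  using list_span_carrier is_subspace_def by blast

lemma list_span_subset_subspace:
  "is_subspace k V \<Longrightarrow> set us \<subseteq> V \<Longrightarrow> list_span k us \<subseteq> V"
  unfolding is_subspace_def using list_span_mono by blast

lemma zero_in_subspace: "is_subspace k U \<Longrightarrow> 0\<^sub>v k \<in> U"
  unfolding is_subspace_def using zero_in_list_span by blast

lemma finite_subspace: "is_subspace k (V :: 'a::{finite,field} vec set) \<Longrightarrow> finite V"
  by (auto simp: is_subspace_def)

lemma finite_subspaces:
  "finite {V :: 'a::{finite,field} vec set. is_subspace k V \<and> P V}"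
  by (rule finite_subset[of _ "Pow (carrier_vec k)"]) (auto dest: is_subspace_carrier)

lemma subspace_extend_basis:
  assumes "is_subspace k V" "indep_list k es" "set es \<subseteq> V"
  shows "\<exists>us. indep_list k (es @ us) \<and> list_span k (es @ us) = V"
proof -
  obtain ws where ws: "set ws \<subseteq> carrier_vec k" "V = list_span k ws"
    using assms(1) is_subspace_def by blast
  obtain us where us: "indep_list k (es @ us)" "list_span k (es @ us) = list_span k (es @ ws)"
    using indep_list_extend[OF assms(2) ws(1)] by blast
  have "set (es @ ws) \<subseteq> list_span k ws"
    using assms(3) set_subset_list_span[OF ws(1)] unfolding ws(2) by simp
  moreover have "set ws \<subseteq> list_span k (es @ ws)"
    using set_subset_list_span[of "es @ ws" k] indep_list_carrier[OF assms(2)] ws(1) by simp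
  ultimately have "list_span k (es @ ws) = V"
    unfolding ws(2) by (rule list_span_eqI)
  with us show ?thesis by blast
qed

lemma subspace_has_basis: "is_subspace k V \<Longrightarrow> \<exists>vs. indep_list k vs \<and> list_span k vs = V"
  using subspace_extend_basis[of k V "[]"] by simp

lemma card_subspace_power:
  fixes U :: "'a::{finite,field} vec set"
  shows "is_subspace k U \<Longrightarrow> \<exists>d. card U = CARD('a) ^ d"
  using subspace_has_basis card_list_span_indep by metis

lemma subspace_eq_if_card_eq:
  fixes U V :: "'a::{finite,field} vec set"
  shows "is_subspace k V \<Longrightarrow> U \<subseteq> V \<Longrightarrow> card U = card V \<Longrightarrow> U = V"
  using finite_subspace card_subset_eq by blast

lemma two_le_CARD_field: "2 \<le> CARD('a::{finite,field})"
proof -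
  have "card {0::'a, 1} \<le> CARD('a)" by (rule card_mono) auto
  then show ?thesis by simp
qed

lemma CARD_field_power_le_iff: "CARD('a::{finite,field}) ^ a \<le> CARD('a) ^ b \<longleftrightarrow> a \<le> b"
  using two_le_CARD_field[where 'a = 'a] by (intro power_increasing_iff) simp

lemma CARD_field_power_eq_iff: "CARD('a::{finite,field}) ^ a = CARD('a) ^ b \<longleftrightarrow> a = b"
  using two_le_CARD_field[where 'a = 'a] by (intro power_inject_exp) simp

lemma card_subspace_le:
  fixes U V :: "'a::{finite,field} vec set"
  assumes "is_subspace k V" "U \<subseteq> V" "card U = CARD('a) ^ d" "card V = CARD('a) ^ R"
  shows "d \<le> R"
  using card_mono[OF finite_subspace[OF assms(1)] assms(2)] assms(3,4)
  by (simp add: CARD_field_power_le_iff)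

section \<open>Counting subspaces\<close>

definition indep_exts :: "nat \<Rightarrow> 'a::field vec list \<Rightarrow> 'a vec set \<Rightarrow> nat \<Rightarrow> 'a vec list set" where
  "indep_exts k es V t = {us. length us = t \<and> set us \<subseteq> V \<and> indep_list k (es @ us)}"

lemma finite_indep_exts:
  "is_subspace k (V :: 'a::{finite,field} vec set) \<Longrightarrow> finite (indep_exts k es V t)"
  by (rule finite_subset[OF _ finite_lists_length_eq[OF finite_subspace, of k V t]])
    (auto simp: indep_exts_def)

lemma indep_exts_Suc:
  assumes V: "is_subspace k V"
  shows "indep_exts k es V (Suc t) =
    (\<lambda>(us, u). us @ [u]) ` (SIGMA us:indep_exts k es V t. V - list_span k (es @ us))"
proof
  show "indep_exts k es V (Suc t) \<subseteq>
    (\<lambda>(us, u). us @ [u]) ` (SIGMA us:indep_exts k es V t. V - list_span k (es @ us))"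
  proof
    fix xs assume xs: "xs \<in> indep_exts k es V (Suc t)"
    then have "length xs = Suc t" by (simp add: indep_exts_def)
    then obtain us u where xs_eq: "xs = us @ [u]"
      by (auto simp: length_Suc_conv_rev)
    have "us \<in> indep_exts k es V t" "u \<in> V - list_span k (es @ us)"
      using xs indep_list_snoc[of k "es @ us" u] unfolding xs_eq by (auto simp: indep_exts_def)
    then show "xs \<in> (\<lambda>(us, u). us @ [u]) ` (SIGMA us:indep_exts k es V t. V - list_span k (es @ us))"
      unfolding xs_eq by (intro image_eqI[of _ _ "(us, u)"]) auto
  qed
  show "(\<lambda>(us, u). us @ [u]) ` (SIGMA us:indep_exts k es V t. V - list_span k (es @ us))
    \<subseteq> indep_exts k es V (Suc t)"
  proof clarify
    fix us u assume "us \<in> indep_exts k es V t" "u \<in> V" "u \<notin> list_span k (es @ us)"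
    then show "us @ [u] \<in> indep_exts k es V (Suc t)"
      using is_subspace_carrier[OF V] indep_list_snoc[of k "es @ us" u]
      by (auto simp: indep_exts_def)
  qed
qed
lemma card_indep_exts:
  fixes V :: "'a::{finite,field} vec set"
  assumes V: "is_subspace k V" and es: "indep_list k es" "set es \<subseteq> V"
  shows "real (card (indep_exts k es V t)) = (\<Prod>i<t. real (card V) - CARD('a) ^ (length es + i))"
proof (induction t)
  case 0
  have "indep_exts k es V 0 = {[]}" using es by (auto simp: indep_exts_def)
  then show ?case by simp
next
  case (Suc t)
  have span_sub: "list_span k (es @ us) \<subseteq> V"
    and card_span: "card (list_span k (es @ us)) = CARD('a) ^ (length es + t)"
    if "us \<in> indep_exts k es V t" for us
    using that list_span_subset_subspace[OF V, of "es @ us"] es card_list_span_indep[of k "es @ us"]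
    by (auto simp: indep_exts_def)
  have "card (indep_exts k es V (Suc t))
      = card (SIGMA us:indep_exts k es V t. V - list_span k (es @ us))"
    unfolding indep_exts_Suc[OF V] by (rule card_image) (auto intro: inj_onI)
  also have "\<dots> = (\<Sum>us\<in>indep_exts k es V t. card (V - list_span k (es @ us)))"
    using finite_indep_exts[OF V] finite_subspace[OF V] by (intro card_SigmaI) auto
  also have "\<dots> = (\<Sum>us\<in>indep_exts k es V t. card V - CARD('a) ^ (length es + t))"
    using span_sub card_span finite_subspace[OF V]
    by (intro sum.cong) (auto simp: card_Diff_subset finite_subset)
  finally have rec: "real (card (indep_exts k es V (Suc t)))
      = real (card (indep_exts k es V t)) * real (card V - CARD('a) ^ (length es + t))"
    by simp
  show ?case
  proof (cases "indep_exts k es V t = {}")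
    case True
    then show ?thesis using rec Suc.IH by simp
  next
    case False
    then obtain us where "us \<in> indep_exts k es V t" by blast
    then have "CARD('a) ^ (length es + t) \<le> card V"
      using card_mono[OF finite_subspace[OF V] span_sub] card_span by metis
    then show ?thesis using rec Suc.IH by (simp add: of_nat_diff mult.commute)
  qed
qed

definition subspaces_between ::
    "nat \<Rightarrow> 'a::field vec list \<Rightarrow> 'a vec set \<Rightarrow> nat \<Rightarrow> 'a vec set set" where
  "subspaces_between k es V d =
     {U. is_subspace k U \<and> list_span k es \<subseteq> U \<and> U \<subseteq> V \<and> card U = CARD('a) ^ d}"

lemma indep_exts_partition:
  fixes V :: "'a::{finite,field} vec set"
  assumes V: "is_subspace k V" and es: "indep_list k es" "set es \<subseteq> V"
  shows "indep_exts k es V t = (\<Union>U\<in>subspaces_between k es V (length es + t). indep_exts k es U t)"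
    and "\<And>U U'. U \<in> subspaces_between k es V (length es + t) \<Longrightarrow>
      U' \<in> subspaces_between k es V (length es + t) \<Longrightarrow> U \<noteq> U' \<Longrightarrow>
      indep_exts k es U t \<inter> indep_exts k es U' t = {}"
proof -
  define \<U> where "\<U> = subspaces_between k es V (length es + t)"
  have es_carrier: "set es \<subseteq> carrier_vec k" using indep_list_carrier[OF es(1)] .
  have spans: "list_span k (es @ us) = U" if "U \<in> \<U>" "us \<in> indep_exts k es U t" for U us
  proof (rule subspace_eq_if_card_eq)
    show "list_span k (es @ us) \<subseteq> U"
      using that set_subset_list_span[OF es_carrier]
      by (intro list_span_subset_subspace) (auto simp: \<U>_def subspaces_between_def indep_exts_def)
  qed (use that card_list_span_indep[of k "es @ us"] in \<open>auto simp: \<U>_def subspaces_between_def indep_exts_def\<close>)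
  show "indep_exts k es V t = (\<Union>U\<in>subspaces_between k es V (length es + t). indep_exts k es U t)"
    unfolding \<U>_def[symmetric]
  proof
    show "indep_exts k es V t \<subseteq> (\<Union>U\<in>\<U>. indep_exts k es U t)"
    proof
      fix us assume us: "us \<in> indep_exts k es V t"
      then have ind: "indep_list k (es @ us)" and "set us \<subseteq> V" by (auto simp: indep_exts_def)
      note carrier = indep_list_carrier[OF ind]
      have "list_span k (es @ us) \<in> \<U>"
        unfolding \<U>_def subspaces_between_def
        using is_subspace_list_span[OF carrier] set_subset_list_span[OF carrier]
          list_span_subset_subspace[OF V] \<open>set us \<subseteq> V\<close> es(2) card_list_span_indep[OF ind] us
        by (auto intro!: list_span_mono simp: indep_exts_def)
      moreover have "us \<in> indep_exts k es (list_span k (es @ us)) t"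
        using us set_subset_list_span[OF carrier] by (auto simp: indep_exts_def)
      ultimately show "us \<in> (\<Union>U\<in>\<U>. indep_exts k es U t)" by blast
    qed
  qed (auto simp: \<U>_def subspaces_between_def indep_exts_def)
  show "indep_exts k es U t \<inter> indep_exts k es U' t = {}"
    if "U \<in> subspaces_between k es V (length es + t)"
      "U' \<in> subspaces_between k es V (length es + t)" "U \<noteq> U'" for U U'
    using spans that unfolding \<U>_def by blast
qed

lemma subspaces_between_empty:
  fixes V :: "'a::{finite,field} vec set"
  assumes V: "is_subspace k V" "card V = CARD('a) ^ R" and es: "indep_list k es"
    and d: "d < length es \<or> R < d"
  shows "subspaces_between k es V d = {}"
proof (rule ccontr)
  assume "subspaces_between k es V d \<noteq> {}"
  then obtain U where U: "is_subspace k U" "list_span k es \<subseteq> U" "U \<subseteq> V" "card U = CARD('a) ^ d"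
    unfolding subspaces_between_def by blast
  have "length es \<le> d"
    using card_subspace_le[OF U(1,2) card_list_span_indep[OF es] U(4)] .
  moreover have "d \<le> R" using card_subspace_le[OF V(1) U(3,4) V(2)] .
  ultimately show False using d by simp
qed

lemma gauss_binom_prod_ratio:
  assumes "m \<le> d" "d \<le> R" "q \<ge> 2"
  shows "gauss_binom q (int R - int m) (int d - int m)
    = (\<Prod>i<d - m. (real q ^ R - real q ^ (m + i)) / (real q ^ d - real q ^ (m + i)))"
proof -
  have "(real q ^ R - real q ^ (m + i)) / (real q ^ d - real q ^ (m + i))
      = (real q ^ (R - m) - real q ^ i) / (real q ^ (d - m) - real q ^ i)" for i
  proof -
    have "real q ^ R = real q ^ m * real q ^ (R - m)" "real q ^ d = real q ^ m * real q ^ (d - m)"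
      using assms by (simp_all flip: power_add)
    moreover have "real q ^ m \<noteq> 0" using assms by simp
    ultimately show ?thesis using assms(3) by (simp add: power_add flip: right_diff_distrib)
  qed
  then show ?thesis
    unfolding gauss_binom_def using assms by (simp add: nat_diff_distrib)
qed

text \<open>Double counting: each independent extension of \<open>es\<close> by \<open>d - |es|\<close> vectors of V spans
  exactly one of the intermediate subspaces, and each of them contains equally many.\<close>

lemma card_subspaces_between:
  fixes V :: "'a::{finite,field} vec set"
  assumes V: "is_subspace k V" "card V = CARD('a) ^ R" and es: "indep_list k es" "set es \<subseteq> V"
  shows "real (card (subspaces_between k es V d))
    = gauss_binom CARD('a) (int R - int (length es)) (int d - int (length es))"
proof (cases "d < length es \<or> R < d")
  case True
  then show ?thesis
    using subspaces_between_empty[OF V es(1) True] by (auto simp: gauss_binom_def)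
next
  case False
  let ?q = "real CARD('a)" and ?m = "length es"
  define t where "t = d - ?m"
  define \<U> where "\<U> = subspaces_between k es V d"
  have d: "d = ?m + t" "?m \<le> d" "d \<le> R" using False t_def by auto
  have fin_\<U>: "finite \<U>"
    unfolding \<U>_def subspaces_between_def by (rule finite_subspaces)
  have es_in_U: "set es \<subseteq> U" if "U \<in> \<U>" for U
    using that set_subset_list_span[OF indep_list_carrier[OF es(1)]]
    unfolding \<U>_def subspaces_between_def by auto
  have card_U: "real (card (indep_exts k es U t)) = (\<Prod>i<t. ?q ^ d - ?q ^ (?m + i))"
    if "U \<in> \<U>" for U
    using card_indep_exts[of k U es t] that es_in_U[OF that] es(1)
    unfolding \<U>_def subspaces_between_def by simp
  have nonzero: "(\<Prod>i<t. ?q ^ d - ?q ^ (?m + i)) \<noteq> 0"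
    using two_le_CARD_field[where 'a = 'a] d(1) by (simp add: power_strict_increasing)
  have "(\<Prod>i<t. ?q ^ R - ?q ^ (?m + i)) = real (card (indep_exts k es V t))"
    using card_indep_exts[OF V(1) es, of t] V(2) by simp
  also have "\<dots> = (\<Sum>U\<in>\<U>. real (card (indep_exts k es U t)))"
    unfolding indep_exts_partition(1)[OF V(1) es, of t] d(1)[symmetric] \<U>_def[symmetric]
    using fin_\<U> finite_indep_exts indep_exts_partition(2)[OF V(1) es, of _ t]
    by (subst card_UN_disjoint) (auto simp: \<U>_def subspaces_between_def d(1))
  also have "\<dots> = real (card \<U>) * (\<Prod>i<t. ?q ^ d - ?q ^ (?m + i))"
    using card_U by simp
  finally have "real (card \<U>) = (\<Prod>i<t. ?q ^ R - ?q ^ (?m + i)) / (\<Prod>i<t. ?q ^ d - ?q ^ (?m + i))"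
    using nonzero by (simp add: field_simps)
  then show ?thesis
    unfolding \<U>_def gauss_binom_prod_ratio[OF d(2,3) two_le_CARD_field] t_def
    by (simp add: prod_dividef)
qed


section \<open>Row spaces and rank\<close>

lemma row_space_eq_list_span:
  assumes M: "M \<in> carrier_mat n k"
  shows "row_space M = list_span k (rows M)"
proof -
  have comb: "transpose_mat M *\<^sub>v c = list_comb k (\<lambda>i. c $ i) (rows M)" if c: "c \<in> carrier_vec n" for c
  proof (rule eq_vecI)
    fix j assume "j < dim_vec (list_comb k (\<lambda>i. c $ i) (rows M))"
    then have j: "j < k" by simp
    have "(transpose_mat M *\<^sub>v c) $ j = (\<Sum>i\<in>{0..<n}. M $$ (i, j) * c $ i)"
      using M c j by (simp add: scalar_prod_def)
    also have "\<dots> = (\<Sum>i<n. c $ i * rows M ! i $ j)"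
      using M j by (intro sum.cong) (auto simp: mult.commute)
    finally show "(transpose_mat M *\<^sub>v c) $ j = list_comb k (\<lambda>i. c $ i) (rows M) $ j"
      using M j by simp
  qed (use M in simp)
  show ?thesis
  proof
    show "row_space M \<subseteq> list_span k (rows M)"
      unfolding row_space_def list_span_def using M comb by auto
    show "list_span k (rows M) \<subseteq> row_space M"
    proof
      fix v assume "v \<in> list_span k (rows M)"
      then obtain c where v: "v = list_comb k c (rows M)" by (auto simp: list_span_def)
      have "v = transpose_mat M *\<^sub>v vec n c"
        unfolding comb[OF vec_carrier] v using M by (intro list_comb_cong) simp
      then show "v \<in> row_space M" unfolding row_space_def using M by auto
    qed
  qed
qed

lemma rows_carrier: "M \<in> carrier_mat n k \<Longrightarrow> set (rows M) \<subseteq> carrier_vec k"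
  using set_rows_carrier by blast

lemma is_subspace_row_space: "M \<in> carrier_mat n k \<Longrightarrow> is_subspace k (row_space M)"
  by (simp add: row_space_eq_list_span is_subspace_list_span rows_carrier)

lemma rows_subset_row_space: "M \<in> carrier_mat n k \<Longrightarrow> set (rows M) \<subseteq> row_space M"
  by (simp add: row_space_eq_list_span set_subset_list_span rows_carrier)

text \<open>If every column is a combination of the d vectors \<open>ws\<close>, every combination of the rows
  is a function of the d coefficients \<open>\<Sum>\<^sub>i c\<^sub>i (ws ! l)\<^sub>i\<close>.\<close>

lemma card_row_span_le:
  fixes M :: "'a::{finite,field} mat"
  assumes M: "M \<in> carrier_mat n k" and cols: "\<And>j. j < k \<Longrightarrow> col M j \<in> list_span n ws"
  shows "card (list_span k (rows M)) \<le> CARD('a) ^ length ws"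
proof -
  have "\<forall>j. \<exists>c. j < k \<longrightarrow> col M j = list_comb n c ws"
    using cols unfolding list_span_def by blast
  then obtain a where a: "\<And>j. j < k \<Longrightarrow> col M j = list_comb n (a j) ws" by metis
  define d where "d = length ws"
  define G where "G t = vec k (\<lambda>j. \<Sum>l<d. a j l * t l)" for t :: "nat \<Rightarrow> 'a"
  have G_restrict: "G (restrict t {..<d}) = G t" for t
    unfolding G_def by (intro arg_cong[where f = "vec k"] ext sum.cong) auto
  have rows_comb: "list_comb k c (rows M) = G (\<lambda>l. \<Sum>i<n. c i * ws ! l $ i)" for c
  proof (rule eq_vecI)
    fix j assume "j < dim_vec (G (\<lambda>l. \<Sum>i<n. c i * ws ! l $ i))"
    then have j: "j < k" by (simp add: G_def)
    have entry: "M $$ (i, j) = (\<Sum>l<d. a j l * ws ! l $ i)" if "i < n" for i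
      using arg_cong[OF a[OF j], of "\<lambda>v. v $ i"] M that j by (simp add: d_def)
    have "list_comb k c (rows M) $ j = (\<Sum>i<n. \<Sum>l<d. c i * (a j l * ws ! l $ i))"
      using M j entry by (simp add: sum_distrib_left)
    also have "\<dots> = (\<Sum>l<d. \<Sum>i<n. a j l * (c i * ws ! l $ i))"
      by (subst sum.swap) (simp add: algebra_simps)
    finally show "list_comb k c (rows M) $ j = G (\<lambda>l. \<Sum>i<n. c i * ws ! l $ i) $ j"
      using j by (simp add: G_def sum_distrib_left)
  qed (simp add: G_def)
  have "list_span k (rows M) \<subseteq> G ` PiE {..<d} (\<lambda>_. UNIV)"
  proof
    fix v assume "v \<in> list_span k (rows M)"
    then obtain c where "v = G (restrict (\<lambda>l. \<Sum>i<n. c i * ws ! l $ i) {..<d})"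
      unfolding list_span_def rows_comb G_restrict by blast
    then show "v \<in> G ` PiE {..<d} (\<lambda>_. UNIV)" by auto
  qed
  then have "card (list_span k (rows M)) \<le> card (G ` PiE {..<d} (\<lambda>_. UNIV :: 'a set))"
    by (rule card_mono[rotated]) (simp add: finite_PiE)
  also have "\<dots> \<le> card (PiE {..<d} (\<lambda>_. UNIV :: 'a set))"
    by (rule card_image_le) (simp add: finite_PiE)
  finally show ?thesis by (simp add: card_PiE d_def)
qed

lemma card_row_space_le_col_span:
  fixes M :: "'a::{finite,field} mat"
  assumes M: "M \<in> carrier_mat n k"
  shows "card (row_space M) \<le> card (list_span n (cols M))"
proof -
  have cols: "set (cols M) \<subseteq> carrier_vec n" using M by (auto simp: cols_def)
  obtain ws where ws: "indep_list n ws" "list_span n ws = list_span n (cols M)"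
    using subspace_has_basis[OF is_subspace_list_span[OF cols]] by blast
  have "col M j \<in> list_span n ws" if "j < k" for j
    using set_subset_list_span[OF cols] ws(2) M that by (auto simp: cols_def)
  then show ?thesis
    using card_row_span_le[OF M] card_list_span_indep[OF ws(1)] ws(2)
      row_space_eq_list_span[OF M] by simp
qed

lemma card_row_space_eq_col_span:
  fixes M :: "'a::{finite,field} mat"
  assumes M: "M \<in> carrier_mat n k"
  shows "card (row_space M) = card (list_span n (cols M))"
proof -
  have "card (list_span n (cols M)) \<le> card (row_space M)"
    using card_row_space_le_col_span[of "transpose_mat M" k n] M
    by (simp add: row_space_eq_list_span)
  then show ?thesis using card_row_space_le_col_span[OF M] by simp
qed

context vec_space
begin

lemma list_span_eq_span:
  assumes "distinct xs" "set xs \<subseteq> carrier_vec n"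
  shows "list_span n xs = span (set xs)"
proof
  show "list_span n xs \<subseteq> span (set xs)"
  proof -
    have "list_comb n c ys \<in> span (set xs)" if "set ys \<subseteq> span (set xs)" for c ys
      using that
    proof (induction ys rule: rev_induct)
      case Nil
      have "0\<^sub>v n = lincomb (\<lambda>_. 0) {}" by (simp add: lincomb_def)
      then have "0\<^sub>v n \<in> span (set xs)" by (rule in_spanI) auto
      then show ?case by (simp add: list_comb_Nil)
    next
      case (snoc y ys)
      then have "y \<in> carrier_vec n" using span_closed[OF assms(2)] by auto
      with snoc show ?case
        by (simp add: list_comb_snoc span_add1 smult_in_span assms(2))
    qed
    then show ?thesis using in_own_span[OF assms(2)] by (auto simp: list_span_def)
  qed
  show "span (set xs) \<subseteq> list_span n xs"
  proof
    fix v assume "v \<in> span (set xs)"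
    then obtain a where a: "lincomb a (set xs) = v"
      using finite_in_span[of "set xs" v] assms(2) by auto
    have "lincomb a (set xs) = list_comb n (\<lambda>i. a (xs ! i)) xs"
    proof (rule eq_vecI)
      fix j assume "j < dim_vec (list_comb n (\<lambda>i. a (xs ! i)) xs)"
      then have j: "j < n" by simp
      have "set xs = (!) xs ` {..<length xs}" by (auto simp: set_conv_nth)
      then have "(\<Sum>x\<in>set xs. a x * x $ j) = (\<Sum>i<length xs. a (xs ! i) * xs ! i $ j)"
        using sum.reindex[OF inj_on_nth[OF assms(1)], of "{..<length xs}" "\<lambda>x. a x * x $ j"]
        by simp
      then show "lincomb a (set xs) $ j = list_comb n (\<lambda>i. a (xs ! i)) xs $ j"
        using j lincomb_index[OF j assms(2)] by simp
    qed (use lincomb_dim[of "set xs" a] assms(2) in simp)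
    then show "v \<in> list_span n xs" unfolding a[symmetric] list_span_def by simp
  qed
qed

lemma indep_list_if_lin_indpt:
  assumes xs: "distinct xs" "set xs \<subseteq> carrier_vec n" and li: "lin_indpt (set xs)"
  shows "indep_list n xs"
  unfolding indep_list_def
proof (intro conjI allI impI xs notI)
  fix i assume i: "i < length xs" and in_span: "xs ! i \<in> list_span n (take i xs)"
  have "xs ! i \<notin> set (take i xs)"
    using xs(1) i by (metis distinct_append id_take_nth_drop disjoint_iff list.set_intros(1))
  then have "set (take i xs) \<subseteq> set xs - {xs ! i}"
    using set_take_subset by fast
  moreover have "list_span n (take i xs) = span (set (take i xs))"
    using xs by (intro list_span_eq_span) (auto dest: in_set_takeD)
  ultimately have "xs ! i \<in> span (set xs - {xs ! i})"
    using in_span span_is_monotone by blast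
  moreover have "xs ! i \<in> set xs" using i by simp
  ultimately have "lin_dep (set xs)" using lindep_span[OF xs(2) List.finite_set] by blast
  then show False using li by simp
qed

lemma rank_basis:
  assumes A: "A \<in> carrier_mat n nc"
  shows "\<exists>ws. indep_list n ws \<and> list_span n ws = list_span n (cols A) \<and> length ws = rank A"
proof -
  have cols: "set (cols A) \<subseteq> carrier_vec n" using A by (auto simp: cols_def)
  obtain S where S: "maximal S (\<lambda>T. T \<subseteq> set (cols A) \<and> lin_indpt T)"
    using maximal_exists[of "\<lambda>T. T \<subseteq> set (cols A) \<and> lin_indpt T" "card (set (cols A))" "{}"]
    by (meson List.finite_set card_mono empty_iff empty_subsetI finite_lin_indpt2 rev_finite_subset)
  have S_cols: "S \<subseteq> set (cols A)" and li: "lin_indpt S" using S unfolding maximal_def by auto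
  then have S_carrier: "S \<subseteq> carrier_vec n" using cols by blast
  obtain xs where xs: "distinct xs" "set xs = S"
    using finite_distinct_list[OF finite_subset[OF S_cols List.finite_set]] by blast
  have "set (cols A) \<subseteq> span S"
  proof
    fix c assume c: "c \<in> set (cols A)"
    show "c \<in> span S"
    proof (rule ccontr)
      assume c_notin: "c \<notin> span S"
      then have "c \<notin> S" using in_own_span[OF S_carrier] by blast
      then have "lin_indpt (S \<union> {c})"
        using lin_dep_iff_in_span[OF S_carrier li] c cols c_notin by blast
      moreover have "S \<union> {c} \<subseteq> set (cols A)" using S_cols c by blast
      ultimately have "S \<union> {c} = S" using S unfolding maximal_def by blast
      then show False using \<open>c \<notin> S\<close> by blast
    qed
  qed
  then have "list_span n xs = list_span n (cols A)"
    using xs S_cols set_subset_list_span[OF cols] list_span_eq_span[OF xs(1)] S_carrier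
    by (intro list_span_eqI) auto
  moreover have "length xs = rank A"
    using rank_card_indpt[OF A S] xs distinct_card by fastforce
  ultimately show ?thesis
    using indep_list_if_lin_indpt[of xs] xs li S_carrier by blast
qed

end

lemma card_row_space_rank:
  fixes M :: "'a::{finite,field} mat"
  assumes M: "M \<in> carrier_mat n k"
  shows "card (row_space M) = CARD('a) ^ vec_space.rank n M"
proof -
  obtain ws where "indep_list n ws" "list_span n ws = list_span n (cols M)"
    "length ws = vec_space.rank n M"
    using vec_space.rank_basis[OF M] by blast
  then show ?thesis
    using card_list_span_indep card_row_space_eq_col_span[OF M] by metis
qed

section \<open>Matrices with a prescribed row space\<close>

definition mats_with_row_space :: "nat \<Rightarrow> nat \<Rightarrow> 'a::field vec set \<Rightarrow> 'a mat set" where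
  "mats_with_row_space n k V = {M \<in> carrier_mat n k. row_space M = V}"

lemma mats_with_rows_in:
  assumes "V \<subseteq> carrier_vec k"
  shows "{M \<in> carrier_mat n k. set (rows M) \<subseteq> V} = mat_of_rows k ` {rs. set rs \<subseteq> V \<and> length rs = n}"
proof
  show "{M \<in> carrier_mat n k. set (rows M) \<subseteq> V} \<subseteq> mat_of_rows k ` {rs. set rs \<subseteq> V \<and> length rs = n}"
  proof
    fix M assume M: "M \<in> {M \<in> carrier_mat n k. set (rows M) \<subseteq> V}"
    then have "M = mat_of_rows k (rows M)" using mat_of_rows_rows[of M] by auto
    then show "M \<in> mat_of_rows k ` {rs. set rs \<subseteq> V \<and> length rs = n}" using M by auto
  qed
  show "mat_of_rows k ` {rs. set rs \<subseteq> V \<and> length rs = n} \<subseteq> {M \<in> carrier_mat n k. set (rows M) \<subseteq> V}"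
    using assms by (auto simp: rows_mat_of_rows[of _ k])
qed

lemma card_mats_with_rows_in:
  fixes V :: "'a::{finite,field} vec set"
  assumes "V \<subseteq> carrier_vec k"
  shows "card {M \<in> carrier_mat n k. set (rows M) \<subseteq> V} = card V ^ n"
    and "finite {M \<in> carrier_mat n k. set (rows M) \<subseteq> V}"
proof -
  have fin: "finite V" using assms by (rule finite_subset) simp
  have inj: "inj_on (mat_of_rows k) {rs. set rs \<subseteq> V \<and> length rs = n}"
  proof (rule inj_onI)
    fix rs rs' assume "rs \<in> {rs. set rs \<subseteq> V \<and> length rs = n}" "rs' \<in> {rs. set rs \<subseteq> V \<and> length rs = n}"
      "mat_of_rows k rs = mat_of_rows k rs'"
    then show "rs = rs'" using assms rows_mat_of_rows[of rs k] rows_mat_of_rows[of rs' k] by auto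
  qed
  show "card {M \<in> carrier_mat n k. set (rows M) \<subseteq> V} = card V ^ n"
    unfolding mats_with_rows_in[OF assms] card_image[OF inj] using card_lists_length_eq[OF fin] by simp
  show "finite {M \<in> carrier_mat n k. set (rows M) \<subseteq> V}"
    unfolding mats_with_rows_in[OF assms] using finite_lists_length_eq[OF fin] by simp
qed

lemma finite_carrier_mat: "finite (carrier_mat n k :: 'a::{finite,field} mat set)"
proof -
  have "carrier_mat n k = {M \<in> carrier_mat n k. set (rows M) \<subseteq> (carrier_vec k :: 'a vec set)}"
    using rows_carrier by blast
  then show ?thesis using card_mats_with_rows_in(2)[of "carrier_vec k :: 'a vec set" k n] by simp
qed

lemma finite_mats_with_row_space:
  "finite (mats_with_row_space n k (V :: 'a::{finite,field} vec set))"
  unfolding mats_with_row_space_def by (rule finite_subset[OF _ finite_carrier_mat]) auto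

lemma card_power_eq_sum_row_spaces:
  fixes V :: "'a::{finite,field} vec set"
  assumes V: "is_subspace k V"
  shows "card V ^ n =
    (\<Sum>U\<in>{U. is_subspace k U \<and> U \<subseteq> V}. card (mats_with_row_space n k U))"
proof -
  let ?S = "{U. is_subspace k U \<and> U \<subseteq> V}"
  have "set (rows M) \<subseteq> V \<longleftrightarrow> row_space M \<subseteq> V" if "M \<in> carrier_mat n k" for M :: "'a mat"
    using rows_subset_row_space[OF that] list_span_subset_subspace[OF V, of "rows M"]
    unfolding row_space_eq_list_span[OF that] by blast
  then have "{M \<in> carrier_mat n k. set (rows M) \<subseteq> V} = (\<Union>U\<in>?S. mats_with_row_space n k U)"
    using is_subspace_row_space by (auto simp: mats_with_row_space_def)
  then have "card V ^ n = card (\<Union>U\<in>?S. mats_with_row_space n k U)"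
    using card_mats_with_rows_in(1)[OF is_subspace_carrier[OF V], of n] by simp
  also have "\<dots> = (\<Sum>U\<in>?S. card (mats_with_row_space n k U))"
    using finite_subspaces finite_mats_with_row_space
    by (intro card_UN_disjoint) (auto simp: mats_with_row_space_def)
  finally show ?thesis .
qed

definition subspaces :: "nat \<Rightarrow> nat \<Rightarrow> 'a::{finite,field} vec set set" where
  "subspaces k d = {V. is_subspace k V \<and> card V = CARD('a) ^ d}"

lemma finite_subspaces_of_dim: "finite (subspaces k d)"
  unfolding subspaces_def by (rule finite_subspaces)

lemma subspaces_between_Nil:
  "subspaces_between k [] V d = {U \<in> subspaces k d. U \<subseteq> V}"
  by (auto simp: subspaces_between_def subspaces_def list_span_Nil zero_in_subspace)

lemma proper_subspaces_by_card:
  fixes V :: "'a::{finite,field} vec set"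
  assumes V: "V \<in> subspaces k R"
  shows "{U. is_subspace k U \<and> U \<subseteq> V} = insert V (\<Union>d<R. subspaces_between k [] V d)"
    and "V \<notin> (\<Union>d<R. subspaces_between k [] V d)"
    and "\<And>d d'. d \<noteq> d' \<Longrightarrow> subspaces_between k [] V d \<inter> subspaces_between k [] V d' = {}"
proof -
  show "{U. is_subspace k U \<and> U \<subseteq> V} = insert V (\<Union>d<R. subspaces_between k [] V d)"
  proof (intro equalityI subsetI)
    fix U assume U: "U \<in> {U. is_subspace k U \<and> U \<subseteq> V}"
    then obtain d where d: "card U = CARD('a) ^ d" using card_subspace_power by blast
    have "d \<le> R" using card_subspace_le[of k V U d R] U d V by (simp add: subspaces_def)
    moreover have "d = R \<Longrightarrow> U = V"
      using subspace_eq_if_card_eq[of k V U] U d V by (simp add: subspaces_def)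
    ultimately show "U \<in> insert V (\<Union>d<R. subspaces_between k [] V d)"
      using U d by (cases "d = R") (auto simp: subspaces_between_Nil subspaces_def)
  qed (use V in \<open>auto simp: subspaces_between_Nil subspaces_def\<close>)
  show "V \<notin> (\<Union>d<R. subspaces_between k [] V d)"
    using V by (auto simp: subspaces_between_Nil subspaces_def CARD_field_power_eq_iff)
  show "subspaces_between k [] V d \<inter> subspaces_between k [] V d' = {}" if "d \<noteq> d'" for d d'
    using that by (auto simp: subspaces_between_Nil subspaces_def CARD_field_power_eq_iff)
qed

lemma card_power_eq_sum_by_dim:
  fixes V :: "'a::{finite,field} vec set"
  assumes V: "V \<in> subspaces k R"
  shows "card V ^ n = card (mats_with_row_space n k V) +
    (\<Sum>d<R. \<Sum>U\<in>subspaces_between k [] V d. card (mats_with_row_space n k U))"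
proof -
  have fin: "finite (subspaces_between k [] V d)" for d
    unfolding subspaces_between_def by (rule finite_subspaces)
  have "card V ^ n = card (mats_with_row_space n k V) +
      (\<Sum>U\<in>(\<Union>d<R. subspaces_between k [] V d). card (mats_with_row_space n k U))"
    using V card_power_eq_sum_row_spaces[of k V n] proper_subspaces_by_card(1,2)[OF V] fin
    by (simp add: subspaces_def)
  also have "(\<Sum>U\<in>(\<Union>d<R. subspaces_between k [] V d). card (mats_with_row_space n k U))
      = (\<Sum>d<R. \<Sum>U\<in>subspaces_between k [] V d. card (mats_with_row_space n k U))"
    using fin proper_subspaces_by_card(3)[OF V] by (intro sum.UNION_disjoint) auto
  finally show ?thesis .
qed

lemma sum_eq_if_constant_across:
  fixes f :: "'a \<Rightarrow> 'b::comm_semiring_1"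
  assumes "card A = card B" "\<And>x y. x \<in> A \<Longrightarrow> y \<in> B \<Longrightarrow> f x = f y"
  shows "sum f A = sum f B"
proof (cases "finite A \<and> A \<noteq> {}")
  case True
  then have B: "finite B" "B \<noteq> {}" using assms(1) card_gt_0_iff by metis+
  then obtain b where b: "b \<in> B" by blast
  have "sum f A = of_nat (card A) * f b" using assms(2)[OF _ b] by simp
  moreover have "sum f B = of_nat (card B) * f b"
    using assms(2) True b by (metis (no_types) ex_in_conv sum_constant sum.cong)
  ultimately show ?thesis using assms(1) by simp
next
  case False
  then have "card A = 0" "card B = 0" using assms(1) by auto
  then show ?thesis by (metis card_eq_0_iff sum.empty sum.infinite)
qed

text \<open>Strong induction on the dimension: in the decomposition of \<open>|V|\<^sup>n\<close> by the size of the row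
  space, every term except the one for V itself depends only on dim V.\<close>

lemma card_mats_with_row_space_eq:
  fixes V W :: "'a::{finite,field} vec set"
  assumes "V \<in> subspaces k R" "W \<in> subspaces k R"
  shows "card (mats_with_row_space n k V) = card (mats_with_row_space n k W)"
  using assms
proof (induction R arbitrary: V W rule: less_induct)
  case (less R)
  have "(\<Sum>U\<in>subspaces_between k [] V d. card (mats_with_row_space n k U))
      = (\<Sum>U\<in>subspaces_between k [] W d. card (mats_with_row_space n k U))" if "d < R" for d
  proof (rule sum_eq_if_constant_across)
    show "card (subspaces_between k [] V d) = card (subspaces_between k [] W d)"
      using card_subspaces_between[of k V R "[]" d] card_subspaces_between[of k W R "[]" d] less.prems
      by (simp add: subspaces_def)
  qed (use less.IH[OF that] in \<open>auto simp: subspaces_between_Nil\<close>)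
  then show ?case
    using card_power_eq_sum_by_dim[OF less.prems(1), of n] card_power_eq_sum_by_dim[OF less.prems(2), of n]
      less.prems by (simp add: subspaces_def)
qed

lemma mats_with_row_space_nonempty:
  fixes V :: "'a::{finite,field} vec set"
  assumes V: "V \<in> subspaces k r" and "r \<le> n"
  shows "mats_with_row_space n k V \<noteq> {}"
proof -
  obtain vs where vs: "indep_list k vs" "list_span k vs = V"
    using subspace_has_basis V by (auto simp: subspaces_def)
  then have "length vs = r"
    using V card_list_span_indep[OF vs(1)] by (simp add: subspaces_def CARD_field_power_eq_iff)
  define rs where "rs = vs @ replicate (n - r) (0\<^sub>v k)"
  have rs: "set rs \<subseteq> carrier_vec k" "length rs = n"
    using indep_list_carrier[OF vs(1)] \<open>length vs = r\<close> \<open>r \<le> n\<close> by (auto simp: rs_def)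
  have "list_span k rs = list_span k vs"
    using set_subset_list_span[OF indep_list_carrier[OF vs(1)]] set_subset_list_span[OF rs(1)]
      zero_in_list_span by (intro list_span_eqI) (auto simp: rs_def)
  moreover have M: "mat_of_rows k rs \<in> carrier_mat n k"
    using mat_of_rows_carrier(1)[of k rs] rs(2) by simp
  ultimately have "mat_of_rows k rs \<in> mats_with_row_space n k V"
    using row_space_eq_list_span[OF M] rs vs(2) by (simp add: mats_with_row_space_def)
  then show ?thesis by blast
qed

lemma card_mats_rank_row_space:
  fixes Q :: "'a::{finite,field} vec set \<Rightarrow> bool" and V\<^sub>0 :: "'a vec set"
  assumes V\<^sub>0: "V\<^sub>0 \<in> subspaces k r"
  shows "card {M :: 'a mat. M \<in> carrier_mat n k \<and> vec_space.rank n M = r \<and> Q (row_space M)}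
    = card {V \<in> subspaces k r. Q V} * card (mats_with_row_space n k V\<^sub>0)"
proof -
  let ?W = "{V \<in> subspaces k r. Q V}"
  have rank: "vec_space.rank n M = r \<longleftrightarrow> card (row_space M) = CARD('a) ^ r"
    if "M \<in> carrier_mat n k" for M :: "'a mat"
    using that by (simp add: card_row_space_rank CARD_field_power_eq_iff)
  have "{M :: 'a mat. M \<in> carrier_mat n k \<and> vec_space.rank n M = r \<and> Q (row_space M)}
      = {M \<in> carrier_mat n k. card (row_space M) = CARD('a) ^ r \<and> Q (row_space M)}"
    using rank by blast
  also have "\<dots> = (\<Union>V\<in>?W. mats_with_row_space n k V)"
    using is_subspace_row_space by (auto simp: mats_with_row_space_def subspaces_def)
  finally have "{M :: 'a mat. M \<in> carrier_mat n k \<and> vec_space.rank n M = r \<and> Q (row_space M)}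
      = (\<Union>V\<in>?W. mats_with_row_space n k V)" .
  moreover have "finite ?W" by (rule finite_subset[OF _ finite_subspaces_of_dim]) auto
  then have "card (\<Union>V\<in>?W. mats_with_row_space n k V) = (\<Sum>V\<in>?W. card (mats_with_row_space n k V))"
    using finite_mats_with_row_space
    by (intro card_UN_disjoint) (auto simp: mats_with_row_space_def)
  moreover have "\<dots> = (\<Sum>V\<in>?W. card (mats_with_row_space n k V\<^sub>0))"
    using card_mats_with_row_space_eq V\<^sub>0 by (intro sum.cong) auto
  ultimately show ?thesis by simp
qed

section \<open>Unit vectors in a subspace\<close>

definition unit_coords :: "nat \<Rightarrow> 'a::field vec set \<Rightarrow> nat set" where
  "unit_coords k V = {i. i < k \<and> unit_vec k i \<in> V}"

definition unit_vec_list :: "nat \<Rightarrow> nat set \<Rightarrow> 'a::field vec list" where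
  "unit_vec_list k S = map (unit_vec k) (sorted_list_of_set S)"

lemma unit_idx_eq_unit_coords: "M \<in> carrier_mat n k \<Longrightarrow> unit_idx M = unit_coords k (row_space M)"
  by (simp add: unit_idx_def unit_coords_def)

text \<open>Coordinate \<open>xs ! i\<close> vanishes on the span of the earlier unit vectors.\<close>

lemma indep_list_unit_vecs:
  assumes "distinct xs" "set xs \<subseteq> {..<k}"
  shows "indep_list k (map (unit_vec k) xs :: 'a::field vec list)"
  unfolding indep_list_def
proof (intro conjI allI impI notI)
  show "set (map (unit_vec k) xs :: 'a vec list) \<subseteq> carrier_vec k" by auto
next
  fix i assume i: "i < length (map (unit_vec k) xs :: 'a vec list)"
    and "(map (unit_vec k) xs :: 'a vec list) ! i \<in> list_span k (take i (map (unit_vec k) xs))"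
  then obtain c where c: "(unit_vec k (xs ! i) :: 'a vec) = list_comb k c (map (unit_vec k) (take i xs))"
    by (auto simp: list_span_def take_map)
  have xi: "xs ! i < k" using i assms(2) nth_mem by fastforce
  have "unit_vec k (xs ! l) $ (xs ! i) = (0 :: 'a)" if "l < i" for l
  proof -
    have l: "l < length xs" using i that by simp
    then have "xs ! l < k" using assms(2) nth_mem by blast
    then show ?thesis using assms i that l xi by (auto simp: nth_eq_iff_index_eq)
  qed
  then have "list_comb k c (map (unit_vec k) (take i xs) :: 'a vec list) $ (xs ! i) = 0"
    using i xi by (auto intro!: sum.neutral)
  then show False using arg_cong[OF c, of "\<lambda>v. v $ (xs ! i)"] xi by simp
qed

lemma unit_vec_list_basis:
  assumes "S \<subseteq> {..<k}"
  shows "indep_list k (unit_vec_list k S :: 'a::field vec list)"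
    and "length (unit_vec_list k S :: 'a vec list) = card S"
    and "set (unit_vec_list k S :: 'a vec list) = unit_vec k ` S"
  using assms finite_subset[OF assms]
  by (auto simp: unit_vec_list_def intro!: indep_list_unit_vecs)

lemma list_span_unit_vec_list_in_subspaces:
  assumes "S \<subseteq> {..<k}"
  shows "list_span k (unit_vec_list k S :: 'a::{finite,field} vec list) \<in> subspaces k (card S)"
proof -
  note basis = unit_vec_list_basis[OF assms, where 'a = 'a]
  show ?thesis
    using is_subspace_list_span[OF indep_list_carrier[OF basis(1)]]
      card_list_span_indep[OF basis(1)] basis(2)
    by (simp add: subspaces_def)
qed

lemma subset_unit_coords_iff:
  assumes S: "S \<subseteq> {..<k}" and V: "is_subspace k V"
  shows "S \<subseteq> unit_coords k V \<longleftrightarrow> list_span k (unit_vec_list k S) \<subseteq> V"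
proof
  assume "S \<subseteq> unit_coords k V"
  then show "list_span k (unit_vec_list k S) \<subseteq> V"
    using unit_vec_list_basis(3)[OF S, where 'a = 'a]
    by (intro list_span_subset_subspace[OF V]) (auto simp: unit_coords_def)
next
  assume "list_span k (unit_vec_list k S) \<subseteq> V"
  then show "S \<subseteq> unit_coords k V"
    using set_subset_list_span[OF indep_list_carrier[OF unit_vec_list_basis(1)[OF S, where 'a = 'a]]]
      unit_vec_list_basis(3)[OF S, where 'a = 'a] S
    by (auto simp: unit_coords_def)
qed

lemma carrier_vec_in_subspaces: "(carrier_vec k :: 'a::{finite,field} vec set) \<in> subspaces k k"
proof -
  have "v \<in> list_span k (unit_vec_list k {..<k})" if v: "v \<in> carrier_vec k" for v :: "'a vec"
  proof -
    have "list_comb k (\<lambda>i. v $ i) (unit_vec_list k {..<k}) = v"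
      using v by (intro eq_vecI)
        (auto simp: unit_vec_list_def lessThan_atLeast0 if_distrib[of "(*) _"] cong: if_cong)
    then show ?thesis unfolding list_span_def by (metis rangeI)
  qed
  then have "list_span k (unit_vec_list k {..<k}) = (carrier_vec k :: 'a vec set)"
    using list_span_carrier by blast
  then show ?thesis using list_span_unit_vec_list_in_subspaces[of "{..<k}" k, where 'a = 'a] by simp
qed

lemma card_unit_coords_le:
  fixes V :: "'a::{finite,field} vec set"
  assumes V: "V \<in> subspaces k r"
  shows "card (unit_coords k V) \<le> r"
proof -
  have S: "unit_coords k V \<subseteq> {..<k}" by (auto simp: unit_coords_def)
  then have "list_span k (unit_vec_list k (unit_coords k V) :: 'a vec list) \<subseteq> V"
    using subset_unit_coords_iff[OF S, of V] V by (simp add: subspaces_def)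
  then show ?thesis
    using card_subspace_le list_span_unit_vec_list_in_subspaces[OF S, where 'a = 'a] V
    by (auto simp: subspaces_def)
qed

text \<open>Double counting of the pairs (S, V) with |S| = m and \<open>e\<^sub>S \<subseteq> V\<close>.\<close>

lemma sum_choose_card_unit_coords:
  assumes "m \<le> k"
  shows "(\<Sum>V\<in>(subspaces k r :: 'a::{finite,field} vec set set). real (card (unit_coords k V) choose m))
    = real (k choose m) * gauss_binom CARD('a) (int k - int m) (int r - int m)"
proof -
  let ?\<S> = "{S. S \<subseteq> {..<k} \<and> card S = m}"
  have per_V: "real (card (unit_coords k V) choose m) = (\<Sum>S\<in>?\<S>. of_bool (S \<subseteq> unit_coords k V))"
    for V :: "'a vec set"
  proof -
    have sub: "unit_coords k V \<subseteq> {..<k}" by (auto simp: unit_coords_def)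
    then have "{S. S \<subseteq> unit_coords k V \<and> card S = m} = ?\<S> \<inter> {S. S \<subseteq> unit_coords k V}" by blast
    then show ?thesis
      using n_subsets[OF finite_subset[OF sub], of m] finite_subset[of ?\<S> "Pow {..<k}"] by auto
  qed
  have per_S: "(\<Sum>V\<in>(subspaces k r :: 'a vec set set). of_bool (S \<subseteq> unit_coords k V))
      = gauss_binom CARD('a) (int k - int m) (int r - int m)" if S: "S \<in> ?\<S>" for S
  proof -
    let ?es = "unit_vec_list k S :: 'a vec list"
    have "(subspaces k r :: 'a vec set set) \<inter> {V. S \<subseteq> unit_coords k V}
        = subspaces_between k ?es (carrier_vec k) r"
      using subset_unit_coords_iff[of S k] S
      by (auto simp: subspaces_def subspaces_between_def dest: is_subspace_carrier)
    moreover have "real (card (subspaces_between k ?es (carrier_vec k) r))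
        = gauss_binom CARD('a) (int k - int m) (int r - int m)"
      using card_subspaces_between[of k "carrier_vec k" k ?es r] carrier_vec_in_subspaces[where 'a = 'a]
        unit_vec_list_basis[of S k, where 'a = 'a] indep_list_carrier[of k ?es] S
      by (simp add: subspaces_def)
    ultimately show ?thesis using finite_subspaces_of_dim[of k r, where 'a = 'a] by simp
  qed
  have "(\<Sum>V\<in>(subspaces k r :: 'a vec set set). real (card (unit_coords k V) choose m))
      = (\<Sum>S\<in>?\<S>. \<Sum>V\<in>(subspaces k r :: 'a vec set set). of_bool (S \<subseteq> unit_coords k V))"
    unfolding per_V by (rule sum.swap)
  also have "\<dots> = real (card ?\<S>) * gauss_binom CARD('a) (int k - int m) (int r - int m)"
    using per_S by simp
  finally show ?thesis using n_subsets[of "{..<k}" m] by simp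
qed

section \<open>The inversion identity\<close>

lemma choose_add_mult_choose:
  "((i + j) choose i) * (s choose (i + j)) = (s choose i) * ((s - i) choose j)"
proof (cases "i + j \<le> s")
  case True
  then show ?thesis using choose_mult[of i "i + j" s] by (simp add: mult.commute)
next
  case False
  then have "s choose (i + j) = 0" "s choose i = 0 \<or> (s - i) choose j = 0"
    by (auto simp: binomial_eq_0_iff)
  then show ?thesis by (metis mult_0 mult_0_right)
qed

lemma alternating_sum_choose_upto:
  assumes "s \<le> k"
  shows "(\<Sum>j=0..k. (-1) ^ j * real (s choose j)) = of_bool (s = 0)"
proof -
  have "(\<Sum>j=0..k. (-1) ^ j * real (s choose j)) = (\<Sum>j\<le>s. (-1) ^ j * real (s choose j))"
    using assms by (intro sum.mono_neutral_right) auto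
  then show ?thesis using choose_alternating_sum[of s, where 'a = real] by (cases "s = 0") auto
qed

lemma sum_alternating_choose_eq_indicator:
  assumes "s \<le> r" "s \<le> k"
  shows "(\<Sum>i=x..r. \<Sum>j=0..k-i. (-1) ^ j * real ((i + j) choose i) * real (s choose (i + j)))
    = of_bool (x \<le> s)"
proof -
  have inner: "(\<Sum>j=0..k-i. (-1) ^ j * real ((i + j) choose i) * real (s choose (i + j)))
      = of_bool (s = i)" for i
  proof -
    have "(\<Sum>j=0..k-i. (-1) ^ j * real ((i + j) choose i) * real (s choose (i + j)))
        = real (s choose i) * (\<Sum>j=0..k-i. (-1) ^ j * real ((s - i) choose j))"
      unfolding sum_distrib_left
      by (intro sum.cong refl) (simp add: mult.assoc mult.left_commute
          flip: of_nat_mult choose_add_mult_choose)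
    also have "\<dots> = of_bool (s = i)"
      using alternating_sum_choose_upto[of "s - i" "k - i"] assms by (cases "i \<le> s") auto
    finally show ?thesis .
  qed
  show ?thesis unfolding inner using assms by (simp add: sum.delta)
qed

section \<open>The distribution of the number of unit vectors in the row space\<close>

lemma card_subspaces: "real (card (subspaces k r :: 'a::{finite,field} vec set set)) = gauss_binom CARD('a) k r"
proof -
  have "subspaces_between k [] (carrier_vec k) r = (subspaces k r :: 'a vec set set)"
    by (auto simp: subspaces_between_Nil subspaces_def dest: is_subspace_carrier)
  then show ?thesis
    using card_subspaces_between[of k "carrier_vec k :: 'a vec set" k "[]" r] carrier_vec_in_subspaces[where 'a = 'a]
    by (simp add: subspaces_def)
qed

lemma sum_eq_card_subspaces_unit_coords_ge:
  assumes "r \<le> k"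
  shows "(\<Sum>i = x..r. real (k choose i) *
            (\<Sum>j = 0..k - i. (-1) ^ j * real ((k - i) choose j) *
                gauss_binom CARD('a::{finite,field}) (int k - int i - int j) (int r - int i - int j)))
    = real (card {V \<in> (subspaces k r :: 'a vec set set). x \<le> card (unit_coords k V)})"
proof -
  let ?s = "\<lambda>V :: 'a vec set. card (unit_coords k V)"
  let ?c = "\<lambda>i j. (-1) ^ j * real ((i + j) choose i)"
  have summand: "real (k choose i) * ((-1) ^ j * real ((k - i) choose j) *
        gauss_binom CARD('a) (int k - int i - int j) (int r - int i - int j))
      = (\<Sum>V\<in>subspaces k r. ?c i j * real (?s V choose (i + j)))"
    if "i \<le> r" "j \<le> k - i" for i j
  proof -
    have ijk: "i + j \<le> k" using that assms by simp
    have "real (k choose i) * real ((k - i) choose j) = real (k choose (i + j)) * real ((i + j) choose i)"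
      using choose_mult[of i "i + j" k] ijk by (simp flip: of_nat_mult)
    then have "real (k choose i) * ((-1) ^ j * real ((k - i) choose j) *
          gauss_binom CARD('a) (int k - int i - int j) (int r - int i - int j))
        = ?c i j * (real (k choose (i + j)) * gauss_binom CARD('a) (int k - int (i + j)) (int r - int (i + j)))"
      by (simp add: algebra_simps)
    also have "\<dots> = ?c i j * (\<Sum>V\<in>subspaces k r. real (?s V choose (i + j)))"
      using sum_choose_card_unit_coords[OF ijk, of r, where 'a = 'a] by simp
    finally show ?thesis by (simp add: sum_distrib_left)
  qed
  have "(\<Sum>i = x..r. real (k choose i) *
            (\<Sum>j = 0..k - i. (-1) ^ j * real ((k - i) choose j) *
                gauss_binom CARD('a) (int k - int i - int j) (int r - int i - int j)))
      = (\<Sum>i = x..r. \<Sum>j = 0..k - i. \<Sum>V\<in>subspaces k r. ?c i j * real (?s V choose (i + j)))"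
    unfolding sum_distrib_left by (intro sum.cong refl summand) auto
  also have "\<dots> = (\<Sum>i = x..r. \<Sum>V\<in>subspaces k r. \<Sum>j = 0..k - i. ?c i j * real (?s V choose (i + j)))"
    by (intro sum.cong refl sum.swap)
  also have "\<dots> = (\<Sum>V\<in>subspaces k r. \<Sum>i = x..r. \<Sum>j = 0..k - i. ?c i j * real (?s V choose (i + j)))"
    by (rule sum.swap)
  also have "\<dots> = (\<Sum>V\<in>subspaces k r. of_bool (x \<le> ?s V))"
    using card_unit_coords_le assms
    by (intro sum.cong refl sum_alternating_choose_eq_indicator) (auto intro: order_trans)
  also have "\<dots> = real (card (subspaces k r \<inter> {V. x \<le> ?s V}))"
    using finite_subspaces_of_dim[of k r, where 'a = 'a] by simp
  also have "subspaces k r \<inter> {V. x \<le> ?s V} = {V \<in> subspaces k r. x \<le> ?s V}"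
    by blast
  finally show ?thesis .
qed

theorem corollary1:
  fixes n k r x :: nat
  assumes "x \<le> r" and "r \<le> min n k"
  shows "real (card {M :: ('a::{finite,field}) mat. M \<in> carrier_mat n k \<and>
                 vec_space.rank n M = r \<and> card (unit_idx M) \<ge> x})
         / real (card {M :: 'a mat. M \<in> carrier_mat n k \<and> vec_space.rank n M = r})
       = (1 / gauss_binom (card (UNIV :: 'a set)) (int k) (int r)) *
         (\<Sum>i = x..r. real (k choose i) *
            (\<Sum>j = 0..k - i. (-1) ^ j * real ((k - i) choose j) *
                gauss_binom (card (UNIV :: 'a set)) (int k - int i - int j) (int r - int i - int j)))"
proof -
  define V\<^sub>0 where "V\<^sub>0 = list_span k (unit_vec_list k {..<r} :: 'a vec list)"
  have V\<^sub>0: "V\<^sub>0 \<in> subspaces k r"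
    using list_span_unit_vec_list_in_subspaces[of "{..<r}" k] assms by (simp add: V\<^sub>0_def)
  define c where "c = card (mats_with_row_space n k V\<^sub>0)"
  have "c > 0"
    using mats_with_row_space_nonempty[OF V\<^sub>0] finite_mats_with_row_space assms
    by (simp add: c_def card_gt_0_iff)
  have "{M :: 'a mat. M \<in> carrier_mat n k \<and> vec_space.rank n M = r \<and> card (unit_idx M) \<ge> x}
      = {M. M \<in> carrier_mat n k \<and> vec_space.rank n M = r \<and> x \<le> card (unit_coords k (row_space M))}"
    by (auto simp: unit_idx_eq_unit_coords)
  then show ?thesis
    using card_mats_rank_row_space[OF V\<^sub>0, of n "\<lambda>V. x \<le> card (unit_coords k V)"]
      card_mats_rank_row_space[OF V\<^sub>0, of n "\<lambda>_. True"] \<open>c > 0\<close> assms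
    by (simp add: c_def card_subspaces sum_eq_card_subspaces_unit_coords_ge)
qed

end
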